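(* Consider $N$ identical cells. For cell $i\in\{0,\dots,N-1\}$ let $x_i(t)\in\mathbb{R}^n$ be its state, $u_i\in\mathbb{R}$ a constant-in-time input, $y_i(t)\in\mathbb{R}$ its readout, and $w_i(t),v_i(t)\in\mathbb{R}^q$ its coupling output and coupling input, with dynamics $$\dot x_i=f(x_i,v_i,u_i),\qquad w_i=g(x_i),\qquad y_i=h(x_i),\qquad v=(M\otimes I_q)w,$$ where $f,g,h$ are continuously differentiable, $M\in\mathbb{R}^{N\times N}$, $\otimes$ is the Kronecker product, and $x,u,y,w,v$ denote the vertical concatenations over cells (e.g. $w=[w_0^T\cdots w_{N-1}^T]^T$). Assume: (1) $M\mathbf{1}_N=\mu\mathbf{1}_N$ for some $\mu\in\mathbb{R}$ (where $\mathbf{1}_N$ is the all-ones vector), and $M$ is diagonalizable as $M=T\Lambda T^{-1}$ with $\Lambda=\mathrm{diag}(\lambda_0(M),\dots,\lambda_{N-1}(M))$; (2) for a given $\bar u\in\mathbb{R}$ there is $\bar x^*\in\mathbb{R}^n$ with $f(\bar x^*,\mu g(\bar x^* ),\bar u)=0$; set $\underline{x}^*=\mathbf{1}_N\otimes\bar x^*$, $\underline{u}=\bar u\mathbf{1}_N$ and $\bar v^*=\mu g(\bar x^* )$ (so $(\underline{x}^*,\underline{u})$ is a spatially homogeneous steady state); (3) this homogeneous steady state is asymptotically stable, i.e. the matrix $(I_N\otimes A)+(I_N\otimes B_v)(M\otimes I_q)(I_N\otimes G)$ below has all eigenvalues with negative real part. Let $A=\frac{\partial f}{\partial x_i}$,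 $B_v=\frac{\partial f}{\partial v_i}$, $B_u=\frac{\partial f}{\partial u_i}$ evaluated at $(\bar x^*,\bar v^*,\bar u)$, and $C=\frac{dh}{dx_i}(\bar x^* )$, $G=\frac{dg}{dx_i}(\bar x^* )$, and consider the linearized system $$\dot{\tilde x}=\big[(I_N\otimes A)+(I_N\otimes B_v)(M\otimes I_q)(I_N\otimes G)\big]\tilde x+(I_N\otimes B_u)\tilde u,\qquad \tilde y=(I_N\otimes C)\tilde x .$$ For a constant-in-time, spatially varying input $u\in\mathbb{R}^N$, put $\tilde u=u-\underline{u}$ and $\hat u=T^{-1}\tilde u$. Then the steady-state perturbed readout $\tilde y^*$ of the linearized system satisfies $\hat y^*:=T^{-1}\tilde y^*=S\hat u$, where $S$ is the diagonal $N\times N$ matrix with entries $$[S]_{kk}=-C\big(A+\lambda_k(M)B_vG\big)^{-1}B_u,\qquad k=0,\dots,N-1.$$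
   Context: The columns of $T$ are called spatial modes and the numbers $[S]_{kk}$ filter coefficients. $I_m$ denotes the $m\times m$ identity matrix. *)

theory Defs
  imports "HOL-Analysis.Analysis"
begin

text \<open>Kronecker product of matrices; index (i,k) of the result corresponds to
  block i, entry k inside the block (vertical concatenation over cells).\<close>
definition kron :: "'a::times^'j^'i \<Rightarrow> 'a^'l^'k \<Rightarrow> 'a^('j \<times> 'l)^('i \<times> 'k)" where
  "kron M P = (\<chi> p r. M $ fst p $ fst r * P $ snd p $ snd r)"

definition cvec :: "real^'n \<Rightarrow> complex^'n" where
  "cvec x = (\<chi> i. complex_of_real (x $ i))"

definition cmat :: "real^'n^'m \<Rightarrow> complex^'n^'m" where
  "cmat A = (\<chi> i j. complex_of_real (A $ i $ j))"

definition diagm :: "('n \<Rightarrow> 'a::zero) \<Rightarrow> 'a^'n^'n" where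
  "diagm d = (\<chi> i j. if i = j then d i else 0)"

definition hurwitz :: "real^'n^'n \<Rightarrow> bool" where
  "hurwitz A \<longleftrightarrow> (\<forall>(l::complex) (v::complex^'n). v \<noteq> 0 \<and> cmat A *v v = l *s v \<longrightarrow> Re l < 0)"

definition ones :: "'a::one^'n" where
  "ones = (\<chi> i. 1)"

end

theory Submission
  imports Defs
begin

(* Let P = T^-1, so that P M = Lambda P. Conjugation by P (x) I_n turns the complexified
   closed-loop matrix I (x) A + M (x) B_v G into the block-diagonal matrix with blocks
   A + lambda_k B_v G. Hurwitz stability excludes the eigenvalue 0 both for the closed-loop
   matrix, so the steady state exists and is unique, and for every block, since a kernel
   vector w of block k yields the kernel vector e_k (x) w of the block-diagonal matrix.
   Applying P (x) I_n to the steady-state equation decouples it into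
   (A + lambda_k B_v G) xhat_k + B_u uhat_k = 0, and as P (x) I commutes with the readout
   I (x) C, the k-th modal readout is C xhat_k = -C (A + lambda_k B_v G)^-1 B_u uhat_k. *)

lemma sum_UNIV_product:
  "(\<Sum>p\<in>UNIV. f p) = (\<Sum>i\<in>UNIV. \<Sum>b\<in>UNIV. f (i, b))"
  for f :: "'a::finite \<times> 'b::finite \<Rightarrow> 'c::comm_monoid_add"
  by (simp add: sum.cartesian_product)

lemma sum_if_zero: "(\<Sum>x\<in>A. if P then f x else 0) = (if P then sum f A else 0)"
  by simp

lemma matrix_add_rdistrib: "(A + B) ** C = A ** C + B ** (C :: 'a::semiring_1^'n^'m)"
  by (simp add: vec_eq_iff matrix_matrix_mult_def distrib_right sum.distrib)

lemma mat_eq_diagm: "mat c = diagm (\<lambda>_. c)"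
  by (simp add: vec_eq_iff mat_def diagm_def)

lemma mat_matrix_vector: "mat c *v x = c *s (x :: 'a::semiring_1^'n)"
  by (simp add: vec_eq_iff matrix_vector_mult_def mat_def if_distrib[of "\<lambda>a. a * _"] cong: if_cong)

lemma mat_mult_matrix_vector: "(mat c ** Y) *v w = c *s (Y *v (w :: 'a::comm_semiring_1^'n))"
  by (simp add: mat_matrix_vector flip: matrix_vector_mul_assoc)

lemma diagm_matrix_vector: "diagm d *v x = (\<chi> i. d i * x $ i)"
  by (simp add: vec_eq_iff matrix_vector_mult_def diagm_def if_distrib[of "\<lambda>a. a * _"] cong: if_cong)

lemma matrix_vector_mult_uminus_right: "A *v (- x) = - (A *v (x :: 'a::ring_1^'n))"
  by (simp add: vec_eq_iff matrix_vector_mult_def sum_negf)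

lemma matrix_inv_inverse:
  fixes X :: "'a::semiring_1^'n^'n"
  assumes "invertible X"
  shows "X ** matrix_inv X = mat 1" "matrix_inv X ** X = mat 1"
proof -
  have "X ** matrix_inv X = mat 1 \<and> matrix_inv X ** X = mat 1"
    unfolding matrix_inv_def using assms unfolding invertible_def by (rule someI_ex)
  then show "X ** matrix_inv X = mat 1" "matrix_inv X ** X = mat 1" by auto
qed

lemma invertible_solve:
  fixes X :: "'a::field^'n^'n"
  assumes "invertible X"
  shows "X *v x + b = 0 \<longleftrightarrow> x = - (matrix_inv X *v b)"
proof
  assume "X *v x + b = 0"
  then have "X *v x = - b"
    unfolding eq_neg_iff_add_eq_0 .
  then have "matrix_inv X *v (X *v x) = - (matrix_inv X *v b)"
    by (simp add: matrix_vector_mult_uminus_right)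
  then show "x = - (matrix_inv X *v b)"
    by (simp add: matrix_vector_mul_assoc matrix_inv_inverse[OF assms])
next
  assume "x = - (matrix_inv X *v b)"
  then show "X *v x + b = 0"
    by (simp add: matrix_vector_mult_uminus_right matrix_vector_mul_assoc matrix_inv_inverse[OF assms])
qed

lemma invertible_ex1_solution:
  fixes X :: "'a::field^'n^'n"
  assumes "invertible X"
  shows "\<exists>!x. X *v x + b = 0"
  unfolding invertible_solve[OF assms] by blast

lemma cvec_zero: "cvec 0 = 0"
  by (simp add: vec_eq_iff cvec_def)

lemma cvec_add: "cvec (x + y) = cvec x + cvec y"
  by (simp add: vec_eq_iff cvec_def)

lemma cvec_eq_zero_iff: "cvec x = 0 \<longleftrightarrow> x = 0"
  by (simp add: vec_eq_iff cvec_def)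

lemma cmat_add: "cmat (X + Y) = cmat X + cmat Y"
  by (simp add: vec_eq_iff cmat_def)

lemma cmat_kron: "cmat (kron P Q) = kron (cmat P) (cmat Q)"
  by (simp add: vec_eq_iff cmat_def kron_def)

lemma cmat_mat_one: "cmat (mat 1) = mat 1"
  by (simp add: vec_eq_iff cmat_def mat_def)

lemma cmat_mv_cvec: "cmat X *v cvec x = cvec (X *v x)"
  by (simp add: vec_eq_iff cmat_def cvec_def matrix_vector_mult_def)

lemma kron_mult:
  fixes P :: "'a::comm_semiring_1^'j^'i" and Q :: "'a^'l^'k"
    and R :: "'a^'r^'j" and S :: "'a^'s^'l"
  shows "kron P Q ** kron R S = kron (P ** R) (Q ** S)"
  by (simp add: vec_eq_iff kron_def matrix_matrix_mult_def sum_UNIV_product sum_product mult_ac)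

lemma kron_mat_one: "kron (mat 1) (mat 1) = (mat 1 :: 'a::semiring_1^('i::finite \<times> 'k::finite)^('i \<times> 'k))"
  by (simp add: vec_eq_iff kron_def mat_def prod_eq_iff)

lemma kron_coupling:
  fixes M :: "'a::comm_semiring_1^'i^'i" and B :: "'a^'q^'n" and G :: "'a^'n^'q"
  shows "kron (mat 1) B ** kron M (mat 1) ** kron (mat 1) G = kron M (B ** G)"
  by (simp add: kron_mult)

lemma kron_intertwine:
  fixes P M D :: "'a::comm_semiring_1^'i^'i" and X Y :: "'a^'k^'k"
  assumes "P ** M = D ** P"
  shows "kron P (mat 1) ** (kron (mat 1) X + kron M Y) = (kron (mat 1) X + kron D Y) ** kron P (mat 1)"
  by (simp add: matrix_add_ldistrib matrix_add_rdistrib kron_mult assms)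

lemma kron_mat_one1_lift:
  "kron P (mat 1 :: 'a::semiring_1^1^1) *v (\<chi> p. z $ fst p) = (\<chi> p. (P *v z) $ fst p)"
  by (simp add: vec_eq_iff kron_def matrix_vector_mult_def sum_UNIV_product mat_def)

lemma kron_mat_one1_drop:
  "(\<chi> i. (kron P (mat 1 :: 'a::semiring_1^1^1) *v z) $ (i, 1)) = P *v (\<chi> i. z $ (i, 1))"
  by (simp add: vec_eq_iff kron_def matrix_vector_mult_def sum_UNIV_product mat_def)

definition vec_block :: "'a^('k::finite \<times> 'l::finite) \<Rightarrow> 'k \<Rightarrow> 'a^'l" where
  "vec_block z k = (\<chi> b. z $ (k, b))"

lemma vec_eq_iff_vec_block: "z = z' \<longleftrightarrow> (\<forall>k. vec_block z k = vec_block z' k)"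
  by (auto simp: vec_eq_iff vec_block_def)

lemma vec_block_add: "vec_block (z + z') k = vec_block z k + vec_block z' k"
  by (simp add: vec_eq_iff vec_block_def)

lemma vec_block_zero [simp]: "vec_block 0 k = 0"
  by (simp add: vec_eq_iff vec_block_def)

lemma vec_block_kron_diagm:
  "vec_block (kron (diagm d) Y *v z) k = d k *s (Y *v vec_block z k)"
  by (simp add: vec_eq_iff vec_block_def kron_def diagm_def matrix_vector_mult_def
      sum_UNIV_product sum_distrib_left mult.assoc if_distrib[of "\<lambda>a. a * _"] sum_if_zero cong: if_cong)

lemma vec_block_kron_mat_one:
  "vec_block (kron (mat 1) Y *v z) k = Y *v vec_block z k"
  by (simp add: mat_eq_diagm vec_block_kron_diagm)

lemma vec_block_block_diag:
  fixes X Y :: "'a::comm_semiring_1^'n^'n"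
  shows "vec_block ((kron (mat 1) X + kron (diagm d) Y) *v z) k = (X + mat (d k) ** Y) *v vec_block z k"
  by (simp add: matrix_vector_mult_add_rdistrib vec_block_add vec_block_kron_mat_one
      vec_block_kron_diagm mat_mult_matrix_vector)

lemma block_diag_invertible:
  fixes X Y :: "'a::field^'n^'n" and d :: "'k::finite \<Rightarrow> 'a"
  assumes ker: "\<forall>z. (kron (mat 1) X + kron (diagm d) Y) *v z = 0 \<longrightarrow> z = 0"
  shows "invertible (X + mat (d k) ** Y)"
  unfolding invertible_left_inverse matrix_left_invertible_ker
proof (intro allI impI)
  fix w assume w: "(X + mat (d k) ** Y) *v w = 0"
  define z :: "'a^('k \<times> 'n)" where "z = (\<chi> p. if fst p = k then w $ snd p else 0)"
  have z_block: "vec_block z j = (if j = k then w else 0)" for j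
    by (simp add: vec_eq_iff vec_block_def z_def)
  have "(kron (mat 1) X + kron (diagm d) Y) *v z = 0"
    unfolding vec_eq_iff_vec_block by (simp add: vec_block_block_diag z_block w)
  then have "z = 0" using ker by blast
  then show "w = 0" using z_block[of k] by simp
qed

lemma hurwitz_cmat_ker:
  assumes "hurwitz X" "cmat X *v v = 0"
  shows "v = 0"
proof (rule ccontr)
  assume "v \<noteq> 0"
  moreover have "cmat X *v v = 0 *s v" using assms(2) by simp
  ultimately have "Re 0 < 0" using assms(1) unfolding hurwitz_def by blast
  then show False by simp
qed

lemma hurwitz_invertible:
  assumes "hurwitz X"
  shows "invertible X"
  unfolding invertible_left_inverse matrix_left_invertible_ker
proof (intro allI impI)
  fix x assume "X *v x = 0"
  then have "cmat X *v cvec x = 0"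
    by (simp add: cmat_mv_cvec cvec_zero)
  then show "x = 0"
    using hurwitz_cmat_ker[OF assms] cvec_eq_zero_iff by blast
qed

lemma hurwitz_modal_blocks_invertible:
  fixes X :: "real^('i::finite \<times> 'n::finite)^('i \<times> 'n)" and P T :: "complex^'i^'i"
    and A Y :: "complex^'n^'n"
  assumes "hurwitz X" and PT: "P ** T = mat 1" and TP: "T ** P = mat 1"
    and intertwine: "kron P (mat 1) ** cmat X = (kron (mat 1) A + kron (diagm d) Y) ** kron P (mat 1)"
  shows "invertible (A + mat (d k) ** Y)"
proof (rule block_diag_invertible, intro allI impI)
  let ?B = "kron (mat 1) A + kron (diagm d) Y"
  let ?K = "kron P (mat 1 :: complex^'n^'n)" and ?K' = "kron T (mat 1 :: complex^'n^'n)"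
  fix z assume Bz: "?B *v z = 0"
  have KK': "?K ** ?K' = mat 1" and K'K: "?K' ** ?K = mat 1"
    by (simp_all add: kron_mult kron_mat_one PT TP)
  have "cmat X ** ?K' = ?K' ** (?K ** cmat X) ** ?K'"
    by (simp add: K'K matrix_mul_assoc)
  also have "\<dots> = ?K' ** ?B ** (?K ** ?K')"
    by (simp only: intertwine matrix_mul_assoc)
  finally have "cmat X ** ?K' = ?K' ** ?B"
    by (simp add: KK')
  then have "cmat X *v (?K' *v z) = ?K' *v (?B *v z)"
    by (simp add: matrix_vector_mul_assoc)
  then have "cmat X *v (?K' *v z) = 0"
    by (simp add: Bz)
  then have "?K' *v z = 0" by (rule hurwitz_cmat_ker[OF assms(1)])
  then have "?K *v (?K' *v z) = 0" by simp
  then show "z = 0" by (simp add: matrix_vector_mul_assoc KK')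
qed

lemma modal_steady_equation:
  fixes Acl :: "real^('i::finite \<times> 'n::finite)^('i \<times> 'n)" and P :: "complex^'i^'i"
    and B :: "complex^('i \<times> 'n)^('i \<times> 'n)" and Bu :: "real^1^'n"
  assumes intertwine: "kron P (mat 1) ** cmat Acl = B ** kron P (mat 1)"
    and steady: "Acl *v xt + kron (mat 1) Bu *v (\<chi> p. ut $ fst p) = 0"
  shows "B *v (kron P (mat 1) *v cvec xt) + kron (mat 1) (cmat Bu) *v (\<chi> p. (P *v cvec ut) $ fst p) = 0"
proof -
  let ?K = "kron P (mat 1 :: complex^'n^'n)"
  have lift: "cvec (\<chi> p. ut $ fst p) = (\<chi> p. cvec ut $ fst p)"
    by (simp add: vec_eq_iff cvec_def)
  have "cvec (Acl *v xt + kron (mat 1) Bu *v (\<chi> p. ut $ fst p)) = 0"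
    using steady by (simp add: cvec_zero)
  then have "cmat Acl *v cvec xt + kron (mat 1) (cmat Bu) *v (\<chi> p. cvec ut $ fst p) = 0"
    by (simp only: cvec_add lift cmat_kron cmat_mat_one flip: cmat_mv_cvec)
  then have "?K *v (cmat Acl *v cvec xt) + ?K *v (kron (mat 1) (cmat Bu) *v (\<chi> p. cvec ut $ fst p)) = 0"
    by (metis matrix_vector_right_distrib matrix_vector_mult_0_right)
  then show ?thesis
    by (simp add: matrix_vector_mul_assoc intertwine kron_mult flip: kron_mat_one1_lift)
qed

lemma modal_steady_state:
  fixes Acl :: "real^('i::finite \<times> 'n::finite)^('i \<times> 'n)" and P :: "complex^'i^'i"
    and A BG :: "real^'n^'n" and Bu :: "real^1^'n" and C :: "real^'n^1"
  assumes intertwine: "kron P (mat 1) ** cmat Acl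
      = (kron (mat 1) (cmat A) + kron (diagm lam) (cmat BG)) ** kron P (mat 1)"
    and blocks: "\<And>k. invertible (cmat A + mat (lam k) ** cmat BG)"
    and steady: "Acl *v xt + kron (mat 1) Bu *v (\<chi> p. ut $ fst p) = 0"
  shows "P *v cvec (\<chi> i. (kron (mat 1) C *v xt) $ (i, 1))
    = diagm (\<lambda>k. - (cmat C ** matrix_inv (cmat A + mat (lam k) ** cmat BG) ** cmat Bu) $ 1 $ 1)
        *v (P *v cvec ut)"
proof -
  define Mk where "Mk k = cmat A + mat (lam k) ** cmat BG" for k
  define xh where "xh = kron P (mat 1 :: complex^'n^'n) *v cvec xt"
  define uh where "uh = P *v cvec ut"
  note modal = modal_steady_equation[OF intertwine steady, folded xh_def uh_def]
  have block: "vec_block xh k = - (matrix_inv (Mk k) *v (cmat Bu *v (\<chi> _. uh $ k)))" for k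
  proof -
    have "vec_block (\<chi> p. uh $ fst p) k = (\<chi> _. uh $ k :: complex^1)"
      by (simp add: vec_eq_iff vec_block_def)
    then have "Mk k *v vec_block xh k + cmat Bu *v (\<chi> _. uh $ k) = 0"
      using arg_cong[OF modal, of "\<lambda>z. vec_block z k"]
      by (simp add: Mk_def vec_block_add vec_block_block_diag vec_block_kron_mat_one)
    then show ?thesis
      using invertible_solve[OF blocks] by (simp add: Mk_def)
  qed
  have "cvec (\<chi> i. (kron (mat 1) C *v xt) $ (i, 1)) = (\<chi> i. cvec (kron (mat 1) C *v xt) $ (i, 1))"
    by (simp add: vec_eq_iff cvec_def)
  also have "\<dots> = (\<chi> i. (kron (mat 1) (cmat C) *v cvec xt) $ (i, 1))"
    by (simp only: cmat_kron cmat_mat_one flip: cmat_mv_cvec)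
  finally have "P *v cvec (\<chi> i. (kron (mat 1) C *v xt) $ (i, 1)) = (\<chi> i. (kron (mat 1) (cmat C) *v xh) $ (i, 1))"
    by (simp add: xh_def matrix_vector_mul_assoc kron_mult flip: kron_mat_one1_drop)
  also have "\<dots> = (\<chi> k. (cmat C *v vec_block xh k) $ 1)"
    by (simp add: vec_eq_iff flip: vec_block_kron_mat_one) (simp add: vec_block_def)
  also have "\<dots> = (\<chi> k. - (cmat C ** matrix_inv (Mk k) ** cmat Bu) $ 1 $ 1 * uh $ k)"
    by (simp add: block matrix_vector_mult_uminus_right matrix_vector_mul_assoc matrix_mul_assoc)
      (simp add: matrix_vector_mult_def)
  finally show ?thesis
    by (simp add: diagm_matrix_vector Mk_def uh_def)
qed

theorem proposition1:
  fixes f :: "real^'n \<Rightarrow> real^'q \<Rightarrow> real \<Rightarrow> real^'n"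
    and g :: "real^'n \<Rightarrow> real^'q"
    and h :: "real^'n \<Rightarrow> real"
    and M :: "real^'N^'N" and \<mu> :: real
    and T :: "complex^'N^'N" and lam :: "'N \<Rightarrow> complex"
    and ubar :: real and xs :: "real^'n" and vs :: "real^'q"
    and A :: "real^'n^'n" and Bv :: "real^'q^'n" and Bu :: "real^1^'n"
    and C :: "real^'n^1" and G :: "real^'n^'q"
  assumes M_row: "M *v ones = \<mu> *s ones"
    and T_inv: "invertible T"
    and M_diag: "cmat M = T ** diagm lam ** matrix_inv T"
    and equil: "f xs (\<mu> *s g xs) ubar = 0"
    and vs_def: "vs = \<mu> *s g xs"
    and dA: "((\<lambda>x. f x vs ubar) has_derivative (\<lambda>d. A *v d)) (at xs)"
    and dBv: "((\<lambda>v. f xs v ubar) has_derivative (\<lambda>d. Bv *v d)) (at vs)"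
    and dBu: "((\<lambda>u. f xs vs u) has_derivative (\<lambda>d. Bu *v (\<chi> _. d))) (at ubar)"
    and dC: "(h has_derivative (\<lambda>d. (C *v d) $ 1)) (at xs)"
    and dG: "(g has_derivative (\<lambda>d. G *v d)) (at xs)"
    and stable: "hurwitz (kron (mat 1 :: real^'N^'N) A
                   + kron (mat 1 :: real^'N^'N) Bv ** kron M (mat 1 :: real^'q^'q)
                     ** kron (mat 1 :: real^'N^'N) G)"
  shows "\<forall>u :: real^'N.
     let Acl = kron (mat 1 :: real^'N^'N) A
                 + kron (mat 1 :: real^'N^'N) Bv ** kron M (mat 1 :: real^'q^'q)
                   ** kron (mat 1 :: real^'N^'N) G;
         ut = u - ubar *s ones;
         uhat = matrix_inv T *v cvec ut;
         steady = (\<lambda>xt :: real^('N \<times> 'n).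
                    Acl *v xt + kron (mat 1 :: real^'N^'N) Bu *v (\<chi> p. ut $ fst p) = 0);
         S = diagm (\<lambda>k. - (cmat C ** matrix_inv (cmat A + mat (lam k) ** cmat (Bv ** G))
                              ** cmat Bu) $ 1 $ 1)
     in (\<forall>k. invertible (cmat A + mat (lam k) ** cmat (Bv ** G)))
        \<and> (\<exists>!xt. steady xt)
        \<and> (\<forall>xt. steady xt \<longrightarrow>
              (let yt = (\<chi> i. (kron (mat 1 :: real^'N^'N) C *v xt) $ (i, 1)) :: real^'N
               in matrix_inv T *v cvec yt = S *v uhat))"
proof -
  \<comment> \<open>Only the linearisation enters: the hypotheses on f, g, h and on the row sums of M
    merely say where A, Bv, Bu, C and G come from.\<close>
  let ?P = "matrix_inv T"
  have TP: "T ** ?P = mat 1" and PT: "?P ** T = mat 1"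
    using matrix_inv_inverse[OF T_inv] by auto
  have "?P ** cmat M = diagm lam ** ?P"
    unfolding M_diag by (metis PT matrix_mul_assoc matrix_mul_lid)
  then have intertwine: "kron ?P (mat 1) ** cmat (kron (mat 1) A
        + kron (mat 1) Bv ** kron M (mat 1 :: real^'q^'q) ** kron (mat 1) G)
      = (kron (mat 1) (cmat A) + kron (diagm lam) (cmat (Bv ** G))) ** kron ?P (mat 1)"
    unfolding kron_coupling cmat_add cmat_kron cmat_mat_one by (rule kron_intertwine)
  have blocks: "invertible (cmat A + mat (lam k) ** cmat (Bv ** G))" for k
    using hurwitz_modal_blocks_invertible[OF stable PT TP intertwine] .
  show ?thesis
    unfolding Let_def
    by (intro conjI allI impI blocks invertible_ex1_solution[OF hurwitz_invertible[OF stable]]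
        modal_steady_state[OF intertwine blocks])
qed

end
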